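(* Let $A \in \mathbb{R}^{m \times n}$ and $b \in \mathbb{R}^m$ be such that $\mathcal{P} = \{x \in \mathbb{R}^n : Ax \geq b\}$ is a polytope. Then the vertex-edge graph $G_\mathrm{vert}$ of $\mathcal{P}$ is the image of the lex-graph $G_\mathrm{lex}$ by the map $\phi : I \mapsto \pi(X^I)$, where $\pi$ sends a matrix in $\mathbb{R}^{n \times (1+m)}$ to its first column.
   Context: Let $\tilde b := [\,b \;\; -\mathrm{Id}_m\,] \in \mathbb{R}^{m \times (1+m)}$. For row vectors $\alpha,\beta \in \mathbb{R}^{1+m}$, $\alpha \leq_{\mathrm{lex}} \beta$ means $\alpha = \beta$ or $\alpha_k < \beta_k$ at the first index $k$ where they differ; for matrices with $1+m$ columns, $X \geq_{\mathrm{lex}} Y$ means $X_i \geq_{\mathrm{lex}} Y_i$ for every row $i$. For $I \subset [m]$, $A_I$, $\tilde b_I$ are the submatrices of rows indexed by $I$. A lex-feasible basis is a set $I \subset [m]$ with $\#I = n$, $A_I$ nonsingular, and $X^I := A_I^{-1}\tilde b_I$ satisfying $A X^I \geq_{\mathrm{lex}} \tilde b$. The lex-graph $G_\mathrm{lex}$ has the lex-feasible bases as vertices, with an edge between $I$ and $I'$ iff $\#(I \cap I') = n-1$. A face of $\mathcal{P}$ is a nonempty set of minimizers over $\mathcal{P}$ of some linear function $x \mapsto \langle c, x\rangle$; vertices and edges are faces of dimension 0 and 1; two vertices $v,w$ are adjacent if the segment $[v,w]$ is an edge. $G_\mathrm{vert}$ is the graph on the vertices of $\mathcal{P}$ with this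 adjacency. The image of a graph $(V,E)$ by $f$ is the graph with vertex set $f(V)$ and edges $\{(f(v),f(w)) : (v,w) \in E,\ f(v) \neq f(w)\}$. *)

theory Defs
  imports "Jordan_Normal_Form.Determinant" "Jordan_Normal_Form.DL_Submatrix"
begin

(* Column indices of matrices with 1+m columns are 0..m (0 = first column). *)

definition btilde :: "nat \<Rightarrow> real vec \<Rightarrow> real mat" where
  "btilde m b = mat m (1 + m) (\<lambda>(i,k). if k = 0 then b $ i else if k = i + 1 then -1 else 0)"

definition lex_le :: "real vec \<Rightarrow> real vec \<Rightarrow> bool" where
  "lex_le \<alpha> \<beta> \<longleftrightarrow> \<alpha> = \<beta> \<or>
     (\<exists>k < dim_vec \<alpha>. (\<forall>j<k. \<alpha> $ j = \<beta> $ j) \<and> \<alpha> $ k < \<beta> $ k)"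

definition mat_lex_ge :: "real mat \<Rightarrow> real mat \<Rightarrow> bool" where
  "mat_lex_ge X Y \<longleftrightarrow> (\<forall>i < dim_row X. lex_le (row Y i) (row X i))"

(* X^I := A_I^{-1} btilde_I *)
definition XI :: "real mat \<Rightarrow> real vec \<Rightarrow> nat set \<Rightarrow> real mat" where
  "XI A b I = (THE X. X \<in> carrier_mat (dim_col A) (1 + dim_row A) \<and>
       submatrix A I UNIV * X = submatrix (btilde (dim_row A) b) I UNIV)"

definition lex_feasible_basis :: "real mat \<Rightarrow> real vec \<Rightarrow> nat set \<Rightarrow> bool" where
  "lex_feasible_basis A b I \<longleftrightarrow> I \<subseteq> {..<dim_row A} \<and> card I = dim_col A \<and>
     det (submatrix A I UNIV) \<noteq> 0 \<and>
     mat_lex_ge (A * XI A b I) (btilde (dim_row A) b)"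

definition G_lex :: "real mat \<Rightarrow> real vec \<Rightarrow> nat set set \<times> (nat set \<times> nat set) set" where
  "G_lex A b = ({I. lex_feasible_basis A b I},
     {(I, I'). lex_feasible_basis A b I \<and> lex_feasible_basis A b I' \<and> card (I \<inter> I') = dim_col A - 1})"

definition graph_image :: "('a \<Rightarrow> 'b) \<Rightarrow> 'a set \<times> ('a \<times> 'a) set \<Rightarrow> 'b set \<times> ('b \<times> 'b) set" where
  "graph_image f G = (f ` fst G, {(f v, f w) | v w. (v, w) \<in> snd G \<and> f v \<noteq> f w})"

definition first_col :: "real mat \<Rightarrow> real vec" where
  "first_col X = col X 0"

definition polyhedron :: "real mat \<Rightarrow> real vec \<Rightarrow> real vec set" where
  "polyhedron A b = {x \<in> carrier_vec (dim_col A). \<forall>i < dim_row A. (A *\<^sub>v x) $ i \<ge> b $ i}"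

definition convex_hull_vec :: "nat \<Rightarrow> real vec set \<Rightarrow> real vec set" where
  "convex_hull_vec n S = {x. \<exists>F l. finite F \<and> F \<subseteq> S \<and> (\<forall>s\<in>F. l s \<ge> 0) \<and> sum l F = 1 \<and>
        x = finsum_vec TYPE(real) n (\<lambda>s. l s \<cdot>\<^sub>v s) F}"

definition is_polytope :: "nat \<Rightarrow> real vec set \<Rightarrow> bool" where
  "is_polytope n P \<longleftrightarrow> (\<exists>V. finite V \<and> V \<subseteq> carrier_vec n \<and> P = convex_hull_vec n V)"

definition is_face :: "nat \<Rightarrow> real vec set \<Rightarrow> real vec set \<Rightarrow> bool" where
  "is_face n P F \<longleftrightarrow> F \<noteq> {} \<and> (\<exists>c \<in> carrier_vec n.
      F = {x \<in> P. \<forall>y \<in> P. c \<bullet> x \<le> c \<bullet> y})"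

definition closed_segment_vec :: "real vec \<Rightarrow> real vec \<Rightarrow> real vec set" where
  "closed_segment_vec v w = {(1 - t) \<cdot>\<^sub>v v + t \<cdot>\<^sub>v w | t. 0 \<le> t \<and> t \<le> 1}"

definition is_vertex :: "nat \<Rightarrow> real vec set \<Rightarrow> real vec \<Rightarrow> bool" where
  "is_vertex n P v \<longleftrightarrow> is_face n P {v}"

definition adjacent :: "nat \<Rightarrow> real vec set \<Rightarrow> real vec \<Rightarrow> real vec \<Rightarrow> bool" where
  "adjacent n P v w \<longleftrightarrow> is_vertex n P v \<and> is_vertex n P w \<and> v \<noteq> w \<and>
      is_face n P (closed_segment_vec v w)"

definition G_vert :: "nat \<Rightarrow> real vec set \<Rightarrow> real vec set \<times> (real vec \<times> real vec) set" where
  "G_vert n P = ({v. is_vertex n P v}, {(v, w). adjacent n P v w})"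

end

theory Submission
  imports Defs
begin

(* For a lex-feasible basis I the rows of I are active at the point basic_point I and
   nonsingular, so this point is the unique minimizer over P of the sum of these rows: a vertex.
   If two such bases share n - 1 rows K, the points active on K form a line through both
   vertices, and the sum of the rows of K is minimized over P exactly on the segment between
   them: an edge.

   Conversely, a point x of P is the first column of the lex-feasible matrix [x | 0], since the
   block -Id of btilde makes every active row lexicographically positive. The lexicographic
   ratio test of the simplex method then adds active rows one at a time, keeping the matrix
   lex-feasible and the rows linearly independent. At a vertex this reaches n rows, i.e. a
   lex-feasible basis. On an edge [v, w] one stops with n - 1 rows at the midpoint; one more
   pivot in direction v - w, resp. w - v, has step length exactly 1/2 and yields bases for v
   and w sharing these n - 1 rows. *)

section \<open>Lexicographic nonnegativity\<close>

definition lex_nonneg :: "nat \<Rightarrow> (nat \<Rightarrow> real) \<Rightarrow> bool" where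
  "lex_nonneg M f \<longleftrightarrow> (\<forall>k<M. f k = 0) \<or> (\<exists>k<M. (\<forall>j<k. f j = 0) \<and> f k > 0)"

lemma lex_nonneg_cong: "(\<And>k. k < M \<Longrightarrow> f k = g k) \<Longrightarrow> lex_nonneg M f = lex_nonneg M g"
  unfolding lex_nonneg_def by (smt (verit) order.strict_trans)

lemma lex_nonneg_zero [simp]: "lex_nonneg M (\<lambda>k. 0)"
  by (simp add: lex_nonneg_def)

lemma lex_nonneg_add:
  assumes "lex_nonneg M f" "lex_nonneg M g"
  shows "lex_nonneg M (\<lambda>k. f k + g k)"
proof -
  consider "\<forall>k<M. f k = 0" | "\<forall>k<M. g k = 0"
    | k1 k2 where "k1 < M" "\<forall>j<k1. f j = 0" "f k1 > 0" "k2 < M" "\<forall>j<k2. g j = 0" "g k2 > 0"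
    using assms unfolding lex_nonneg_def by blast
  then show ?thesis
  proof cases
    case 1
    then show ?thesis using assms(2) lex_nonneg_cong[of M g "\<lambda>k. f k + g k"] by simp
  next
    case 2
    then show ?thesis using assms(1) lex_nonneg_cong[of M f "\<lambda>k. f k + g k"] by simp
  next
    case 3
    define k where "k = min k1 k2"
    have "k < M" "\<forall>j<k. f j + g j = 0" using 3 by (auto simp: k_def)
    moreover have "f k + g k > 0"
      using 3 by (cases k1 k2 rule: linorder_cases) (simp_all add: k_def)
    ultimately show ?thesis unfolding lex_nonneg_def by blast
  qed
qed

lemma lex_nonneg_scale:
  assumes "c \<ge> 0" "lex_nonneg M f"
  shows "lex_nonneg M (\<lambda>k. c * f k)"
proof (cases "c = 0")
  case False
  then have "c > 0" using assms(1) by simp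
  then show ?thesis using assms(2) unfolding lex_nonneg_def by (auto intro: mult_pos_pos)
qed simp

lemma lex_nonneg_total: "lex_nonneg M f \<or> lex_nonneg M (\<lambda>k. - f k)"
proof (cases "\<forall>k<M. f k = 0")
  case False
  define k where "k = (LEAST k. k < M \<and> f k \<noteq> 0)"
  have k: "k < M" "f k \<noteq> 0"
    using LeastI_ex[of "\<lambda>k. k < M \<and> f k \<noteq> 0"] False unfolding k_def by auto
  have "f j = 0" if "j < k" for j
    using not_less_Least[of j "\<lambda>k. k < M \<and> f k \<noteq> 0", folded k_def] that k(1) by auto
  then show ?thesis using k unfolding lex_nonneg_def by (cases "f k > 0") (auto simp: linorder_neq_iff)
qed (simp add: lex_nonneg_def)

lemma lex_nonneg_first: "lex_nonneg M f \<Longrightarrow> 0 < M \<Longrightarrow> f 0 \<ge> 0"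
  unfolding lex_nonneg_def by (metis less_eq_real_def neq0_conv)

lemma lex_nonneg_ex_min:
  assumes "finite B" "B \<noteq> {}"
  shows "\<exists>j\<in>B. \<forall>i\<in>B. lex_nonneg M (\<lambda>k. r i k - r j k)"
  using assms
proof (induction B rule: finite_ne_induct)
  case (singleton x)
  then show ?case by simp
next
  case (insert x F)
  then obtain j where j: "j \<in> F" "\<forall>i\<in>F. lex_nonneg M (\<lambda>k. r i k - r j k)" by blast
  show ?case
  proof (cases "lex_nonneg M (\<lambda>k. r j k - r x k)")
    case True
    have "lex_nonneg M (\<lambda>k. r i k - r x k)" if "i \<in> F" for i
      using lex_nonneg_add[OF j(2)[rule_format, OF that] True] by simp
    then show ?thesis by auto
  next
    case False
    then have "lex_nonneg M (\<lambda>k. r x k - r j k)"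
      using lex_nonneg_total[of M "\<lambda>k. r j k - r x k"] by simp
    then show ?thesis using j by auto
  qed
qed

lemma lex_le_iff_lex_nonneg:
  assumes "dim_vec \<alpha> = M" "dim_vec \<beta> = M"
  shows "lex_le \<alpha> \<beta> \<longleftrightarrow> lex_nonneg M (\<lambda>k. \<beta> $ k - \<alpha> $ k)"
proof
  assume "lex_nonneg M (\<lambda>k. \<beta> $ k - \<alpha> $ k)"
  moreover have "\<alpha> = \<beta>" if "\<forall>k<M. \<beta> $ k - \<alpha> $ k = 0"
    using that assms by (intro eq_vecI) auto
  ultimately show "lex_le \<alpha> \<beta>" unfolding lex_le_def lex_nonneg_def using assms by auto
qed (use assms in \<open>auto simp: lex_le_def lex_nonneg_def\<close>)

section \<open>Vectors and matrices\<close>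

lemma scalar_prod_self_pos:
  assumes "(d :: real vec) \<in> carrier_vec n" "d \<noteq> 0\<^sub>v n"
  shows "d \<bullet> d > 0"
proof -
  obtain a where a: "a < n" "d $ a \<noteq> 0"
    using assms by (metis carrier_vecD eq_vecI index_zero_vec(1) index_zero_vec(2))
  have "d \<bullet> d = (\<Sum>i\<in>{0..<n}. d $ i * d $ i)" unfolding scalar_prod_def using assms(1) by simp
  also have "\<dots> > 0" using a by (intro sum_pos2[of _ a]) (auto simp: zero_less_mult_iff linorder_neq_iff)
  finally show ?thesis .
qed

lemma ex_nonzero_orthogonal_vec:
  assumes "S \<subseteq> carrier_vec n" "finite S" "card S < n"
  shows "\<exists>d\<in>carrier_vec n. d \<noteq> 0\<^sub>v n \<and> (\<forall>s\<in>S. s \<bullet> (d :: real vec) = 0)"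
proof -
  obtain vs where vs: "set vs = S" "distinct vs" using finite_distinct_list[OF assms(2)] by blast
  have len: "length vs < n" using vs assms(3) distinct_card by fastforce
  define M where "M = mat\<^sub>r n n (\<lambda>i. if i = length vs then 0\<^sub>v n else if i < length vs then vs ! i else 0\<^sub>v n)"
  have "det M = 0"
    unfolding M_def by (rule det_row_0[OF len]) (use vs assms(1) in \<open>auto simp: subset_iff\<close>)
  then obtain d where d: "d \<in> carrier_vec n" "d \<noteq> 0\<^sub>v n" "M *\<^sub>v d = 0\<^sub>v n"
    using det_0_iff_vec_prod_zero[of M n] unfolding M_def by auto
  have "vs ! i \<bullet> d = 0" if "i < length vs" for i
  proof -
    have "vs ! i \<in> carrier_vec n" using that vs assms(1) nth_mem by blast
    then show ?thesis using that len arg_cong[OF d(3), of "\<lambda>u. u $ i"] unfolding M_def by auto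
  qed
  then show ?thesis using d vs by (metis in_set_conv_nth)
qed

lemma det_nonzero_if_biorthogonal:
  fixes B :: "real mat"
  assumes B: "B \<in> carrier_mat n n" and D: "\<And>l. l < n \<Longrightarrow> D l \<in> carrier_vec n"
    and diag: "\<And>k. k < n \<Longrightarrow> row B k \<bullet> D k \<noteq> 0"
    and off: "\<And>k l. k < n \<Longrightarrow> l < n \<Longrightarrow> k \<noteq> l \<Longrightarrow> row B k \<bullet> D l = 0"
  shows "det B \<noteq> 0"
proof -
  define C where "C = mat n n (\<lambda>(a, l). D l $ a)"
  have C: "C \<in> carrier_mat n n" unfolding C_def by simp
  have BC: "(B * C) $$ (k, l) = row B k \<bullet> D l" if "k < n" "l < n" for k l
  proof -
    have "col C l = D l" unfolding C_def using that D[OF that(2)] by (intro eq_vecI) auto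
    then show ?thesis using that B C by simp
  qed
  have "upper_triangular (B * C)"
    unfolding upper_triangular_def using B C BC off by auto
  then have "det (B * C) = prod_list (diag_mat (B * C))"
    using det_upper_triangular B C by (metis mult_carrier_mat)
  also have "\<dots> \<noteq> 0"
    using B C BC diag by (auto simp: prod_list_zero_iff diag_mat_def)
  finally show ?thesis using det_mult[OF B C] by simp
qed

lemma scalar_prod_add_smult:
  assumes "u \<in> carrier_vec n" "x \<in> carrier_vec n" "y \<in> carrier_vec n"
  shows "u \<bullet> (x + t \<cdot>\<^sub>v y) = u \<bullet> x + t * (u \<bullet> (y :: real vec))"
  using assms by (simp add: scalar_prod_add_distrib[of _ n])

lemma closed_segment_vec_eq:
  assumes "v \<in> carrier_vec n" "w \<in> carrier_vec n"
  shows "closed_segment_vec v w = {v + t \<cdot>\<^sub>v (w - v) | t. 0 \<le> t \<and> t \<le> (1 :: real)}"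
proof -
  have "(1 - t) \<cdot>\<^sub>v v + t \<cdot>\<^sub>v w = v + t \<cdot>\<^sub>v (w - v)" for t :: real
    using assms by (intro eq_vecI) (auto simp: algebra_simps)
  then show ?thesis unfolding closed_segment_vec_def by simp
qed

lemma vec_eq_if_diff_zero:
  assumes "x \<in> carrier_vec n" "y \<in> carrier_vec n" "x - y = 0\<^sub>v n"
  shows "x = (y :: real vec)"
proof (rule eq_vecI)
  fix a assume "a < dim_vec y"
  then have a: "a < n" using assms(2) by simp
  have "(x - y) $ a = 0" using assms(3) a by simp
  moreover have "(x - y) $ a = x $ a - y $ a" using assms(2) a by simp
  ultimately show "x $ a = y $ a" by simp
qed (use assms in simp)

lemma ex_remove_eq:
  assumes "finite I" "K \<subseteq> I" "Suc (card K) = card I"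
  shows "\<exists>i\<in>I. I - {i} = K"
proof -
  have "card (I - K) = 1" using card_Diff_subset[OF finite_subset[OF assms(2,1)] assms(2)] assms(3) by simp
  then obtain i where "I - K = {i}" by (rule card_1_singletonE)
  then show ?thesis using assms(2) by (intro bexI[of _ i]) auto
qed

lemma line_param_le_one:
  assumes "v \<in> carrier_vec n" "w \<in> carrier_vec n" "v \<noteq> w" "s' \<ge> 0"
    and eq: "v + s \<cdot>\<^sub>v (w - v) = w + s' \<cdot>\<^sub>v (v - w)"
  shows "s \<le> (1 :: real)"
proof -
  obtain a where a: "a < n" "v $ a \<noteq> w $ a" using assms(1-3) by (metis carrier_vecD eq_vecI)
  have "v $ a + s * (w $ a - v $ a) = w $ a + s' * (v $ a - w $ a)"
    using arg_cong[OF eq, of "\<lambda>u. u $ a"] a(1) assms(1,2) by simp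
  then have "(s + s' - 1) * (w $ a - v $ a) = 0" by (simp add: algebra_simps)
  then show ?thesis using a(2) assms(4) by simp
qed

section \<open>The polyhedron and its lex-feasible bases\<close>

locale lin_ineq =
  fixes A :: "real mat" and b :: "real vec" and m n :: nat
  assumes A_carrier: "A \<in> carrier_mat m n" and b_carrier: "b \<in> carrier_vec m"
begin

abbreviation "P \<equiv> polyhedron A b"
abbreviation "bt \<equiv> btilde m b"
abbreviation "A_sub I \<equiv> submatrix A I UNIV"
abbreviation "basic_point I \<equiv> first_col (XI A b I)"

lemma dim_A [simp]: "dim_row A = m" "dim_col A = n"
  using A_carrier by auto

lemma row_A_carrier [simp]: "j < m \<Longrightarrow> row A j \<in> carrier_vec n"
  using A_carrier by auto

lemma btilde_carrier: "bt \<in> carrier_mat m (1 + m)"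
  unfolding btilde_def by auto

lemma btilde_index:
  "j < m \<Longrightarrow> k < 1 + m \<Longrightarrow> bt $$ (j, k) = (if k = 0 then b $ j else if k = j + 1 then -1 else 0)"
  unfolding btilde_def by auto

lemma mem_P_iff: "x \<in> P \<longleftrightarrow> x \<in> carrier_vec n \<and> (\<forall>j<m. b $ j \<le> row A j \<bullet> x)"
  unfolding polyhedron_def using A_carrier by auto

lemma mem_P_carrier: "x \<in> P \<Longrightarrow> x \<in> carrier_vec n"
  and mem_P_row: "x \<in> P \<Longrightarrow> j < m \<Longrightarrow> b $ j \<le> row A j \<bullet> x"
  using mem_P_iff by auto

definition active :: "real vec \<Rightarrow> nat set" where
  "active x = {j. j < m \<and> row A j \<bullet> x = b $ j}"

lemma active_subset: "active x \<subseteq> {..<m}"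
  unfolding active_def by auto

definition minimizers :: "real vec \<Rightarrow> real vec set" where
  "minimizers c = {x \<in> P. \<forall>y\<in>P. c \<bullet> x \<le> c \<bullet> y}"

lemma is_face_iff: "is_face n P F \<longleftrightarrow> F \<noteq> {} \<and> (\<exists>c\<in>carrier_vec n. F = minimizers c)"
  unfolding is_face_def minimizers_def by simp

definition row_sum :: "nat set \<Rightarrow> real vec" where
  "row_sum S = vec n (\<lambda>a. \<Sum>i\<in>S. A $$ (i, a))"

lemma row_sum_carrier [simp]: "row_sum S \<in> carrier_vec n"
  unfolding row_sum_def by simp

lemma row_sum_scalar_prod:
  assumes "S \<subseteq> {..<m}" "x \<in> carrier_vec n"
  shows "row_sum S \<bullet> x = (\<Sum>i\<in>S. row A i \<bullet> x)"
proof -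
  have "row_sum S \<bullet> x = (\<Sum>a<n. \<Sum>i\<in>S. A $$ (i, a) * x $ a)"
    unfolding row_sum_def scalar_prod_def using assms(2) by (simp add: sum_distrib_right lessThan_atLeast0)
  also have "\<dots> = (\<Sum>i\<in>S. \<Sum>a<n. A $$ (i, a) * x $ a)"
    by (rule sum.swap)
  also have "\<dots> = (\<Sum>i\<in>S. row A i \<bullet> x)"
    using assms by (intro sum.cong) (auto simp: scalar_prod_def lessThan_atLeast0)
  finally show ?thesis .
qed

lemma minimizers_row_sum:
  assumes "x0 \<in> P" "S \<subseteq> active x0"
  shows "minimizers (row_sum S) = {x \<in> P. S \<subseteq> active x}"
proof -
  have S: "S \<subseteq> {..<m}" "finite S" using assms(2) unfolding active_def by (auto intro: finite_subset)
  have slack: "row_sum S \<bullet> x - (\<Sum>i\<in>S. b $ i) = (\<Sum>i\<in>S. row A i \<bullet> x - b $ i)" if "x \<in> P" for x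
    using row_sum_scalar_prod[OF S(1) mem_P_carrier[OF that]] by (simp add: sum_subtractf)
  have nonneg: "\<forall>i\<in>S. 0 \<le> row A i \<bullet> x - b $ i" if "x \<in> P" for x
    using S(1) mem_P_row[OF that] by auto
  have zero: "(\<Sum>i\<in>S. row A i \<bullet> x - b $ i) = 0 \<longleftrightarrow> S \<subseteq> active x" if "x \<in> P" for x
    using sum_nonneg_eq_0_iff[OF S(2) nonneg[rule_format, OF that]] S(1) by (auto simp: active_def)
  have zero_iff: "row_sum S \<bullet> x = (\<Sum>i\<in>S. b $ i) \<longleftrightarrow> S \<subseteq> active x" if "x \<in> P" for x
    using slack[OF that] zero[OF that] by (metis eq_iff_diff_eq_0)
  have ge: "row_sum S \<bullet> x \<ge> (\<Sum>i\<in>S. b $ i)" if "x \<in> P" for x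
  proof -
    have "0 \<le> (\<Sum>i\<in>S. row A i \<bullet> x - b $ i)"
      by (rule sum_nonneg) (use nonneg[OF that] in blast)
    then show ?thesis using slack[OF that] by linarith
  qed
  show ?thesis
  proof (intro equalityI subsetI)
    fix x assume "x \<in> minimizers (row_sum S)"
    then have x: "x \<in> P" "row_sum S \<bullet> x \<le> row_sum S \<bullet> x0"
      using assms(1) by (auto simp: minimizers_def)
    then have "row_sum S \<bullet> x = (\<Sum>i\<in>S. b $ i)"
      using ge[OF x(1)] zero_iff[OF assms(1)] assms(2) by linarith
    then show "x \<in> {x \<in> P. S \<subseteq> active x}" using zero_iff x(1) by blast
  next
    fix x assume x: "x \<in> {x \<in> P. S \<subseteq> active x}"
    then have "row_sum S \<bullet> x = (\<Sum>i\<in>S. b $ i)" using zero_iff by blast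
    then show "x \<in> minimizers (row_sum S)" using x ge by (auto simp: minimizers_def)
  qed
qed

definition lex_feasible :: "real mat \<Rightarrow> bool" where
  "lex_feasible X \<longleftrightarrow> (\<forall>j<m. lex_nonneg (1 + m) (\<lambda>k. (A * X) $$ (j, k) - bt $$ (j, k)))"

definition tight_on :: "real mat \<Rightarrow> nat set \<Rightarrow> bool" where
  "tight_on X I \<longleftrightarrow> (\<forall>i\<in>I. \<forall>k<1 + m. (A * X) $$ (i, k) = bt $$ (i, k))"

text \<open>Linear independence of the rows indexed by I, witnessed by a biorthogonal system.\<close>

definition independent_rows :: "nat set \<Rightarrow> bool" where
  "independent_rows I \<longleftrightarrow>
     (\<forall>i\<in>I. \<exists>D\<in>carrier_vec n. row A i \<bullet> D \<noteq> 0 \<and> (\<forall>i'\<in>I - {i}. row A i' \<bullet> D = 0))"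

lemma mat_lex_ge_iff_lex_feasible:
  assumes X: "X \<in> carrier_mat n (1 + m)"
  shows "mat_lex_ge (A * X) bt \<longleftrightarrow> lex_feasible X"
proof -
  have "lex_le (row bt j) (row (A * X) j) \<longleftrightarrow> lex_nonneg (1 + m) (\<lambda>k. (A * X) $$ (j, k) - bt $$ (j, k))"
    if "j < m" for j
    using that X btilde_carrier
    by (subst lex_le_iff_lex_nonneg[where M = "1 + m"]) (auto intro!: lex_nonneg_cong)
  then show ?thesis unfolding mat_lex_ge_def lex_feasible_def by simp
qed

lemma lex_feasible_first_col:
  assumes "X \<in> carrier_mat n (1 + m)" "lex_feasible X"
  shows "col X 0 \<in> P"
proof -
  have "b $ j \<le> row A j \<bullet> col X 0" if "j < m" for j
  proof -
    have "lex_nonneg (1 + m) (\<lambda>k. (A * X) $$ (j, k) - bt $$ (j, k))"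
      using assms(2) that unfolding lex_feasible_def by blast
    from lex_nonneg_first[OF this] show ?thesis using assms(1) that by (simp add: btilde_index)
  qed
  moreover have "col X 0 \<in> carrier_vec n"
    using assms(1) by (metis carrier_matD(1) col_dim)
  ultimately show ?thesis by (simp add: mem_P_iff)
qed

lemma tight_on_first_col:
  assumes "X \<in> carrier_mat n (1 + m)" "tight_on X I" "I \<subseteq> {..<m}"
  shows "I \<subseteq> active (col X 0)"
proof
  fix i assume i: "i \<in> I"
  then have "(A * X) $$ (i, 0) = bt $$ (i, 0)" "i < m" using assms(2,3) unfolding tight_on_def by auto
  then show "i \<in> active (col X 0)" using assms(1) by (simp add: active_def btilde_index)
qed

lemma A_sub_carrier_rows:
  assumes "I \<subseteq> {..<m}"
  shows "A_sub I \<in> carrier_mat (card I) n" "\<And>k. k < card I \<Longrightarrow> row (A_sub I) k = row A (pick I k)"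
    "\<And>k. k < card I \<Longrightarrow> pick I k \<in> I"
proof -
  have I: "{i. i < m \<and> i \<in> I} = I" using assms by auto
  show "A_sub I \<in> carrier_mat (card I) n" by (simp add: submatrix_def I)
  show "pick I k \<in> I" if "k < card I" for k using pick_in_set that by auto
  then show "row (A_sub I) k = row A (pick I k)" if "k < card I" for k
  proof -
    have "pick I k < m" using pick_in_set that assms by auto
    then show ?thesis using that by (intro eq_vecI) (auto simp: submatrix_def I pick_UNIV)
  qed
qed

lemma pick_image:
  assumes "finite I"
  shows "pick I ` {..<card I} = I"
proof (intro equalityI subsetI)
  fix i assume "i \<in> pick I ` {..<card I}"
  then show "i \<in> I" by (auto simp: pick_in_set)
next
  fix i assume i: "i \<in> I"
  have "{a\<in>I. a < i} \<subset> I" using i by blast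
  then have "card {a\<in>I. a < i} < card I" by (simp add: psubset_card_mono assms)
  then show "i \<in> pick I ` {..<card I}"
    by (intro image_eqI[where x = "card {a\<in>I. a < i}"]) (simp_all add: pick_card_in_set[OF i])
qed

lemma A_sub_kernel:
  assumes I: "I \<subseteq> {..<m}" "card I = n" "det (A_sub I) \<noteq> 0"
    and y: "y \<in> carrier_vec n" "\<forall>i\<in>I. row A i \<bullet> y = 0"
  shows "y = 0\<^sub>v n"
proof -
  have "A_sub I *\<^sub>v y = 0\<^sub>v n"
    using A_sub_carrier_rows[OF I(1)] I(2) y by (intro eq_vecI) auto
  then show ?thesis using det_0_iff_vec_prod_zero[of "A_sub I" n] A_sub_carrier_rows(1)[OF I(1)] I y by auto
qed

lemma A_sub_mult_eq_iff_tight_on: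
  assumes I: "I \<subseteq> {..<m}" and X: "X \<in> carrier_mat n (1 + m)"
  shows "A_sub I * X = submatrix bt I UNIV \<longleftrightarrow> tight_on X I"
proof -
  have Im: "{i. i < m \<and> i \<in> I} = I" using I by auto
  have dim_bt: "dim_row bt = m" "dim_col bt = 1 + m" using btilde_carrier by auto
  have bt_sub: "submatrix bt I UNIV \<in> carrier_mat (card I) (1 + m)"
    by (simp add: submatrix_def dim_bt Im)
  have entry: "(A_sub I * X) $$ (k, l) = (A * X) $$ (pick I k, l)"
    "submatrix bt I UNIV $$ (k, l) = bt $$ (pick I k, l)" if "k < card I" "l < 1 + m" for k l
    using that A_sub_carrier_rows[OF I] X I btilde_carrier
    by (auto simp: submatrix_index Im pick_UNIV subset_iff)
  have "A_sub I * X = submatrix bt I UNIV \<longleftrightarrow>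
      (\<forall>k<card I. \<forall>l<1 + m. (A_sub I * X) $$ (k, l) = submatrix bt I UNIV $$ (k, l))"
    using A_sub_carrier_rows(1)[OF I] X bt_sub by (auto intro!: eq_matI simp del: index_mult_mat(1))
  also have "\<dots> \<longleftrightarrow> (\<forall>k<card I. \<forall>l<1 + m. (A * X) $$ (pick I k, l) = bt $$ (pick I k, l))"
    using entry by simp
  also have "\<dots> \<longleftrightarrow> tight_on X I"
  proof -
    have "pick I ` {..<card I} = I"
      using pick_image finite_subset[OF I] by blast
    then have "(\<forall>i\<in>I. Q i) \<longleftrightarrow> (\<forall>k<card I. Q (pick I k))" for Q
      by (metis (no_types) lessThan_iff image_iff)
    then show ?thesis unfolding tight_on_def by (rule sym)
  qed
  finally show ?thesis .
qed

lemma btilde_sub_carrier: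
  "I \<subseteq> {..<m} \<Longrightarrow> submatrix bt I UNIV \<in> carrier_mat (card I) (1 + m)"
  using btilde_carrier by (auto simp: submatrix_def Int_absorb2 Collect_conj_eq lessThan_def[symmetric] Int_commute)

lemma tight_on_col:
  assumes "X \<in> carrier_mat n (1 + m)" "tight_on X I" "I \<subseteq> {..<m}" "i \<in> I" "k < 1 + m"
  shows "row A i \<bullet> col X k = bt $$ (i, k)"
proof -
  have "(A * X) $$ (i, k) = bt $$ (i, k)" using assms(2,4,5) unfolding tight_on_def by blast
  moreover have "i < m" using assms(3,4) by auto
  ultimately show ?thesis using assms(1,5) by simp
qed

lemma XI_eqI:
  assumes I: "I \<subseteq> {..<m}" "card I = n" "det (A_sub I) \<noteq> 0"
    and X: "X \<in> carrier_mat n (1 + m)" "tight_on X I"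
  shows "XI A b I = X"
  unfolding XI_def
proof (rule the_equality)
  show "X \<in> carrier_mat (dim_col A) (1 + dim_row A) \<and> A_sub I * X = submatrix (btilde (dim_row A) b) I UNIV"
    using X A_sub_mult_eq_iff_tight_on[OF I(1) X(1)] by simp
next
  fix Y assume "Y \<in> carrier_mat (dim_col A) (1 + dim_row A) \<and> A_sub I * Y = submatrix (btilde (dim_row A) b) I UNIV"
  then have Y: "Y \<in> carrier_mat n (1 + m)" "tight_on Y I"
    using A_sub_mult_eq_iff_tight_on[OF I(1)] by auto
  show "Y = X"
  proof (rule eq_matI)
    fix a k assume a: "a < dim_row X" and k: "k < dim_col X"
    have "col Y k - col X k = 0\<^sub>v n"
    proof (rule A_sub_kernel[OF I])
      show "col Y k - col X k \<in> carrier_vec n" using X Y k by simp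
      show "\<forall>i\<in>I. row A i \<bullet> (col Y k - col X k) = 0"
        using X Y k I(1) tight_on_col[OF X(1,2) I(1)] tight_on_col[OF Y I(1)]
        by (auto simp: scalar_prod_minus_distrib[of _ n])
    qed
    moreover have "col Y k \<in> carrier_vec n" "col X k \<in> carrier_vec n" using X Y k by simp_all
    ultimately have "col Y k = col X k" using vec_eq_if_diff_zero by blast
    then have "col Y k $ a = col X k $ a" by simp
    then show "Y $$ (a, k) = X $$ (a, k)" using a k X Y by simp
  qed (use X Y in auto)
qed

lemma XI_tight:
  assumes I: "I \<subseteq> {..<m}" "card I = n" "det (A_sub I) \<noteq> 0"
  shows "XI A b I \<in> carrier_mat n (1 + m)" "tight_on (XI A b I) I"
proof -
  have A_I: "A_sub I \<in> carrier_mat n n" using A_sub_carrier_rows(1)[OF I(1)] I(2) by simp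
  from det_non_zero_imp_unit[OF A_I I(3), unfolded Units_def, of "()"]
  obtain B where B: "B \<in> carrier_mat n n" "A_sub I * B = 1\<^sub>m n"
    by (auto simp: ring_mat_def)
  have bt_I: "submatrix bt I UNIV \<in> carrier_mat n (1 + m)" using btilde_sub_carrier[OF I(1)] I(2) by simp
  define X where "X = B * submatrix bt I UNIV"
  have X: "X \<in> carrier_mat n (1 + m)" unfolding X_def using B bt_I by simp
  have "A_sub I * X = submatrix bt I UNIV"
    unfolding X_def using assoc_mult_mat[OF A_I B(1) bt_I] B(2) bt_I by simp
  then have "tight_on X I" using A_sub_mult_eq_iff_tight_on[OF I(1) X] by simp
  then show "XI A b I \<in> carrier_mat n (1 + m)" "tight_on (XI A b I) I"
    using XI_eqI[OF I X] X by simp_all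
qed

lemma lex_feasible_basis_iff:
  "lex_feasible_basis A b I \<longleftrightarrow>
     I \<subseteq> {..<m} \<and> card I = n \<and> det (A_sub I) \<noteq> 0 \<and> lex_feasible (XI A b I)"
proof (cases "I \<subseteq> {..<m} \<and> card I = n \<and> det (A_sub I) \<noteq> 0")
  case True
  then show ?thesis
    using mat_lex_ge_iff_lex_feasible[OF XI_tight(1)] unfolding lex_feasible_basis_def by auto
qed (auto simp: lex_feasible_basis_def)

lemma det_A_sub_nonzero:
  assumes I: "I \<subseteq> {..<m}" "card I = n" and indep: "independent_rows I"
  shows "det (A_sub I) \<noteq> 0"
proof -
  have "\<forall>i\<in>I. \<exists>D. D \<in> carrier_vec n \<and> row A i \<bullet> D \<noteq> 0 \<and> (\<forall>i'\<in>I - {i}. row A i' \<bullet> D = 0)"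
    using indep unfolding independent_rows_def by blast
  then obtain D where D: "\<forall>i\<in>I. D i \<in> carrier_vec n \<and> row A i \<bullet> D i \<noteq> 0 \<and> (\<forall>i'\<in>I - {i}. row A i' \<bullet> D i = 0)"
    by (rule bchoice[elim_format]) blast
  have pick: "pick I k \<in> I" if "k < n" for k using pick_in_set that I(2) by auto
  have pick_inj: "pick I k \<noteq> pick I l" if "k < n" "l < n" "k \<noteq> l" for k l
  proof (cases "k < l")
    case True
    then show ?thesis using pick_mono[of l I k] that I(2) by simp
  next
    case False
    then show ?thesis using pick_mono[of k I l] that I(2) by simp
  qed
  show ?thesis
  proof (rule det_nonzero_if_biorthogonal[where D = "\<lambda>l. D (pick I l)"])
    show "A_sub I \<in> carrier_mat n n" using A_sub_carrier_rows(1)[OF I(1)] I(2) by simp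
  qed (use D pick pick_inj A_sub_carrier_rows(2)[OF I(1)] I(2) in auto)
qed

lemma lex_feasible_basisI:
  assumes X: "X \<in> carrier_mat n (1 + m)" "lex_feasible X" "tight_on X I"
    and I: "I \<subseteq> {..<m}" "card I = n" "independent_rows I"
  shows "lex_feasible_basis A b I" "basic_point I = col X 0"
proof -
  have det: "det (A_sub I) \<noteq> 0" using det_A_sub_nonzero I by blast
  have "XI A b I = X" using XI_eqI[OF I(1,2) det X(1,3)] .
  then show "lex_feasible_basis A b I" "basic_point I = col X 0"
    using lex_feasible_basis_iff I det X by (simp_all add: first_col_def)
qed

lemma lex_feasible_basisD:
  assumes "lex_feasible_basis A b I"
  shows "basic_point I \<in> P" "I \<subseteq> active (basic_point I)" "card I = n"
    and "\<And>y. y \<in> carrier_vec n \<Longrightarrow> \<forall>i\<in>I. row A i \<bullet> y = 0 \<Longrightarrow> y = 0\<^sub>v n"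
proof -
  have I: "I \<subseteq> {..<m}" "card I = n" "det (A_sub I) \<noteq> 0" "lex_feasible (XI A b I)"
    using assms by (simp_all add: lex_feasible_basis_iff)
  note X = XI_tight[OF I(1-3)]
  show "basic_point I \<in> P" using lex_feasible_first_col[OF X(1) I(4)] by (simp add: first_col_def)
  show "I \<subseteq> active (basic_point I)" using tight_on_first_col[OF X I(1)] by (simp add: first_col_def)
  show "card I = n" by fact
  show "y = 0\<^sub>v n" if "y \<in> carrier_vec n" "\<forall>i\<in>I. row A i \<bullet> y = 0" for y
    using A_sub_kernel[OF I(1-3)] that by blast
qed

lemma lex_feasible_basis_unique_point:
  assumes I: "lex_feasible_basis A b I" and x: "x \<in> carrier_vec n" "I \<subseteq> active x"
  shows "x = basic_point I"
proof -
  note B = lex_feasible_basisD[OF I]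
  have v: "basic_point I \<in> carrier_vec n" using mem_P_carrier[OF B(1)] .
  have "row A i \<bullet> (x - basic_point I) = 0" if "i \<in> I" for i
  proof -
    have "i \<in> active x" "i \<in> active (basic_point I)" using that x(2) B(2) by auto
    then show ?thesis using x(1) v by (simp add: active_def scalar_prod_minus_distrib[of _ n])
  qed
  then have "x - basic_point I = 0\<^sub>v n" using B(4) x(1) v by simp
  then show ?thesis using vec_eq_if_diff_zero x(1) v by blast
qed


section \<open>Faces of the polyhedron\<close>

lemma active_line:
  assumes ker: "\<And>y. y \<in> carrier_vec n \<Longrightarrow> \<forall>j\<in>I. row A j \<bullet> y = 0 \<Longrightarrow> y = 0\<^sub>v n"
    and v: "v \<in> P" "I \<subseteq> active v" and i: "i \<in> I"
    and w: "w \<in> P" "I - {i} \<subseteq> active w" "w \<noteq> v"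
    and x: "x \<in> P" "I - {i} \<subseteq> active x"
  shows "\<exists>s\<ge>0. x = v + s \<cdot>\<^sub>v (w - v)"
proof -
  have vc: "v \<in> carrier_vec n" and wc: "w \<in> carrier_vec n" and xc: "x \<in> carrier_vec n"
    using v(1) w(1) x(1) by (simp_all add: mem_P_carrier)
  have Im: "I \<subseteq> {..<m}" using v(2) active_subset by blast
  define d where "d = w - v"
  have dc: "d \<in> carrier_vec n" unfolding d_def using wc vc by simp
  have rd: "row A j \<bullet> d = row A j \<bullet> w - row A j \<bullet> v" if "j < m" for j
    unfolding d_def using that wc vc by (simp add: scalar_prod_minus_distrib[of _ n])
  have K: "row A j \<bullet> d = 0" "row A j \<bullet> x = row A j \<bullet> v" if "j \<in> I - {i}" for j
  proof -
    have "j \<in> active v" "j \<in> active w" "j \<in> active x" using that v(2) w(2) x(2) by auto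
    then show "row A j \<bullet> d = 0" "row A j \<bullet> x = row A j \<bullet> v" by (simp_all add: active_def rd)
  qed
  have im: "i < m" "row A i \<bullet> v = b $ i" using i v(2) by (auto simp: active_def)
  have "row A i \<bullet> d \<noteq> 0"
  proof
    assume "row A i \<bullet> d = 0"
    then have "\<forall>j\<in>I. row A j \<bullet> d = 0" using K(1) by blast
    then have "w - v = 0\<^sub>v n" using ker[OF dc] unfolding d_def by blast
    then show False using vec_eq_if_diff_zero[OF wc vc] w(3) by blast
  qed
  moreover have "row A i \<bullet> d \<ge> 0" using rd[OF im(1)] mem_P_row[OF w(1) im(1)] im(2) by simp
  ultimately have pos: "row A i \<bullet> d > 0" by simp
  define s where "s = (row A i \<bullet> x - row A i \<bullet> v) / (row A i \<bullet> d)"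
  have s: "s \<ge> 0" unfolding s_def using pos mem_P_row[OF x(1) im(1)] im(2) by simp
  have "x - (v + s \<cdot>\<^sub>v d) = 0\<^sub>v n"
  proof (rule ker)
    show "x - (v + s \<cdot>\<^sub>v d) \<in> carrier_vec n" using xc vc dc by simp
    show "\<forall>j\<in>I. row A j \<bullet> (x - (v + s \<cdot>\<^sub>v d)) = 0"
    proof
      fix j assume j: "j \<in> I"
      then have "row A j \<bullet> (x - (v + s \<cdot>\<^sub>v d)) = row A j \<bullet> x - row A j \<bullet> v - s * (row A j \<bullet> d)"
        using Im xc vc dc
        by (auto simp: scalar_prod_minus_distrib[of _ n] scalar_prod_add_smult[of _ n])
      also have "\<dots> = 0" using K[of j] pos j by (cases "j = i") (auto simp: s_def)
      finally show "row A j \<bullet> (x - (v + s \<cdot>\<^sub>v d)) = 0" .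
    qed
  qed
  then have "x = v + s \<cdot>\<^sub>v d" using vec_eq_if_diff_zero xc vc dc by simp
  then show ?thesis using s unfolding d_def by blast
qed

lemma closed_segment_subset_active:
  assumes v: "v \<in> P" "K \<subseteq> active v" and w: "w \<in> P" "K \<subseteq> active w"
  shows "closed_segment_vec v w \<subseteq> {x \<in> P. K \<subseteq> active x}"
proof
  fix x assume "x \<in> closed_segment_vec v w"
  then obtain t where t: "0 \<le> t" "t \<le> 1" "x = (1 - t) \<cdot>\<^sub>v v + t \<cdot>\<^sub>v w"
    unfolding closed_segment_vec_def by blast
  have vc: "v \<in> carrier_vec n" and wc: "w \<in> carrier_vec n" using v(1) w(1) by (simp_all add: mem_P_carrier)
  have rx: "row A j \<bullet> x - b $ j = (1 - t) * (row A j \<bullet> v - b $ j) + t * (row A j \<bullet> w - b $ j)"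
    if "j < m" for j
    using t(3) that vc wc by (simp add: scalar_prod_add_distrib[of _ n] algebra_simps)
  have "b $ j \<le> row A j \<bullet> x" if "j < m" for j
  proof -
    have "0 \<le> (1 - t) * (row A j \<bullet> v - b $ j) + t * (row A j \<bullet> w - b $ j)"
      using t mem_P_row[OF v(1) that] mem_P_row[OF w(1) that] by (intro add_nonneg_nonneg mult_nonneg_nonneg) auto
    then show ?thesis using rx[OF that] by linarith
  qed
  moreover have "row A j \<bullet> x = b $ j" if "j \<in> K" for j
  proof -
    have "j \<in> active v" "j \<in> active w" using that v(2) w(2) by auto
    then show ?thesis using rx[of j] by (simp add: active_def)
  qed
  ultimately show "x \<in> {x \<in> P. K \<subseteq> active x}"
    using t(3) vc wc v(2) active_subset by (auto simp: mem_P_iff active_def)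
qed

lemma small_move:
  assumes x: "x \<in> P" and y: "y \<in> carrier_vec n" and ortho: "\<forall>j\<in>active x. row A j \<bullet> y = 0"
  shows "\<exists>\<tau>>0. \<forall>\<sigma>. \<bar>\<sigma>\<bar> \<le> \<tau> \<longrightarrow> x + \<sigma> \<cdot>\<^sub>v y \<in> P"
proof -
  have xc: "x \<in> carrier_vec n" using mem_P_carrier[OF x] .
  define F where "F = {j. j < m \<and> row A j \<bullet> y \<noteq> 0}"
  define slack where "slack j = (row A j \<bullet> x - b $ j) / \<bar>row A j \<bullet> y\<bar>" for j
  define \<tau> where "\<tau> = Min (insert 1 (slack ` F))"
  have slack_pos: "slack j > 0" if "j \<in> F" for j
  proof -
    have "j \<notin> active x" using that ortho unfolding F_def by auto
    then show ?thesis using that mem_P_row[OF x] unfolding F_def slack_def active_def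
      by (auto intro!: divide_pos_pos simp: less_le)
  qed
  have finF: "finite F" unfolding F_def by simp
  have \<tau>_pos: "\<tau> > 0" unfolding \<tau>_def using finF slack_pos by (subst Min_gr_iff) auto
  have \<tau>_le: "\<tau> \<le> slack j" if "j \<in> F" for j unfolding \<tau>_def using finF that by (intro Min_le) auto
  have "x + \<sigma> \<cdot>\<^sub>v y \<in> P" if \<sigma>: "\<bar>\<sigma>\<bar> \<le> \<tau>" for \<sigma>
  proof -
    have "b $ j \<le> row A j \<bullet> x + \<sigma> * (row A j \<bullet> y)" if j: "j < m" for j
    proof (cases "j \<in> F")
      case True
      then have ay: "\<bar>row A j \<bullet> y\<bar> > 0" unfolding F_def by simp
      have "\<bar>\<sigma> * (row A j \<bullet> y)\<bar> \<le> \<tau> * \<bar>row A j \<bullet> y\<bar>"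
        using \<sigma> by (simp add: abs_mult mult_right_mono)
      also have "\<dots> \<le> slack j * \<bar>row A j \<bullet> y\<bar>" using \<tau>_le[OF True] by (simp add: mult_right_mono)
      also have "\<dots> = row A j \<bullet> x - b $ j" unfolding slack_def using ay by simp
      finally show ?thesis by linarith
    next
      case False
      then show ?thesis using mem_P_row[OF x j] j unfolding F_def by simp
    qed
    then show ?thesis using xc y by (simp add: mem_P_iff scalar_prod_add_smult[of _ n])
  qed
  then show ?thesis using \<tau>_pos by blast
qed

lemma minimizer_move:
  assumes c: "c \<in> carrier_vec n" and x: "x \<in> minimizers c" and y: "y \<in> carrier_vec n"
    and ortho: "\<forall>j\<in>active x. row A j \<bullet> y = 0"
  shows "\<exists>\<tau>>0. x + \<tau> \<cdot>\<^sub>v y \<in> minimizers c"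
proof -
  have xP: "x \<in> P" and xmin: "\<forall>z\<in>P. c \<bullet> x \<le> c \<bullet> z" using x by (auto simp: minimizers_def)
  obtain \<tau> where \<tau>: "\<tau> > 0" "\<forall>\<sigma>. \<bar>\<sigma>\<bar> \<le> \<tau> \<longrightarrow> x + \<sigma> \<cdot>\<^sub>v y \<in> P"
    using small_move[OF xP y ortho] by blast
  have c_move: "c \<bullet> (x + \<sigma> \<cdot>\<^sub>v y) = c \<bullet> x + \<sigma> * (c \<bullet> y)" for \<sigma>
    using scalar_prod_add_smult[OF c mem_P_carrier[OF xP] y] .
  have "c \<bullet> x \<le> c \<bullet> x + \<tau> * (c \<bullet> y)" "c \<bullet> x \<le> c \<bullet> x + (- \<tau>) * (c \<bullet> y)"
    using xmin \<tau> c_move by (metis abs_minus_cancel abs_of_pos order_refl)+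
  then have "c \<bullet> y = 0" using \<tau>(1) by (simp add: mult_le_0_iff zero_le_mult_iff order.antisym)
  then show ?thesis using \<tau> xmin c_move by (auto simp: minimizers_def)
qed

lemma vertex_in_P: "is_vertex n P v \<Longrightarrow> v \<in> P"
  unfolding is_vertex_def is_face_iff minimizers_def by blast

lemma vertex_active_kernel:
  assumes v: "is_vertex n P v" and y: "y \<in> carrier_vec n" "\<forall>j\<in>active v. row A j \<bullet> y = 0"
  shows "y = 0\<^sub>v n"
proof -
  obtain c where c: "c \<in> carrier_vec n" "{v} = minimizers c"
    using v unfolding is_vertex_def is_face_iff by blast
  obtain \<tau> where \<tau>: "\<tau> > 0" "v + \<tau> \<cdot>\<^sub>v y \<in> minimizers c"
    using minimizer_move[OF c(1) _ y] c(2) by blast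
  then have moved: "v + \<tau> \<cdot>\<^sub>v y = v" using c(2) by blast
  show ?thesis
  proof (rule eq_vecI)
    fix a assume "a < dim_vec (0\<^sub>v n)"
    then have a: "a < n" by simp
    have "(v + \<tau> \<cdot>\<^sub>v y) $ a = v $ a" using moved by simp
    then show "y $ a = 0\<^sub>v n $ a" using a \<tau>(1) y(1) by simp
  qed (use y in simp)
qed

lemma edge_midpoint_active_kernel:
  assumes adj: "adjacent n P v w" and y: "y \<in> carrier_vec n"
    and ortho: "\<forall>j\<in>active (v + (1/2) \<cdot>\<^sub>v (w - v)). row A j \<bullet> y = 0"
  shows "\<exists>\<mu>. y = \<mu> \<cdot>\<^sub>v (w - v)"
proof -
  have vc: "v \<in> carrier_vec n" and wc: "w \<in> carrier_vec n"
    using adj vertex_in_P mem_P_carrier unfolding adjacent_def by blast+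
  obtain c where c: "c \<in> carrier_vec n" "closed_segment_vec v w = minimizers c"
    using adj unfolding adjacent_def is_face_iff by blast
  note seg = closed_segment_vec_eq[OF vc wc]
  have "v + (1/2) \<cdot>\<^sub>v (w - v) \<in> minimizers c"
    unfolding c(2)[symmetric] seg by (rule CollectI, rule exI[of _ "1/2"]) simp
  then obtain \<tau> where \<tau>: "\<tau> > 0" "v + (1/2) \<cdot>\<^sub>v (w - v) + \<tau> \<cdot>\<^sub>v y \<in> minimizers c"
    using minimizer_move[OF c(1) _ y ortho] by blast
  then obtain t where moved: "v + (1/2) \<cdot>\<^sub>v (w - v) + \<tau> \<cdot>\<^sub>v y = v + t \<cdot>\<^sub>v (w - v)"
    using c(2) seg by auto
  have "y = ((t - 1/2) / \<tau>) \<cdot>\<^sub>v (w - v)"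
  proof (rule eq_vecI)
    fix a assume "a < dim_vec (((t - 1/2) / \<tau>) \<cdot>\<^sub>v (w - v))"
    then have a: "a < n" using vc wc by simp
    have "(v + (1/2) \<cdot>\<^sub>v (w - v) + \<tau> \<cdot>\<^sub>v y) $ a = (v + t \<cdot>\<^sub>v (w - v)) $ a" using moved by simp
    then show "y $ a = (((t - 1/2) / \<tau>) \<cdot>\<^sub>v (w - v)) $ a"
      using a \<tau>(1) y vc wc by (simp add: field_simps)
  qed (use y vc wc in simp)
  then show ?thesis by blast
qed

section \<open>Lex-feasible bases give vertices and edges\<close>

lemma vertex_if_lex_feasible_basis:
  assumes "lex_feasible_basis A b I"
  shows "is_vertex n P (basic_point I)"
proof -
  note B = lex_feasible_basisD[OF assms]
  have "minimizers (row_sum I) = {x \<in> P. I \<subseteq> active x}"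
    by (rule minimizers_row_sum[OF B(1,2)])
  also have "\<dots> = {basic_point I}"
    using B(1,2) lex_feasible_basis_unique_point[OF assms] mem_P_carrier by blast
  finally show ?thesis unfolding is_vertex_def is_face_iff using row_sum_carrier by blast
qed

lemma adjacent_if_lex_feasible_bases:
  assumes I: "lex_feasible_basis A b I" and I': "lex_feasible_basis A b I'"
    and card: "card (I \<inter> I') = n - 1" and ne: "basic_point I \<noteq> basic_point I'"
  shows "adjacent n P (basic_point I) (basic_point I')"
proof -
  let ?v = "basic_point I" and ?w = "basic_point I'"
  note B = lex_feasible_basisD[OF I] and B' = lex_feasible_basisD[OF I']
  have vc: "?v \<in> carrier_vec n" and wc: "?w \<in> carrier_vec n"
    using B(1) B'(1) by (simp_all add: mem_P_carrier)
  define K where "K = I \<inter> I'"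
  have fin: "finite I" "finite I'"
    using B(2) B'(2) active_subset by (meson finite_lessThan finite_subset subset_trans)+
  have "n \<noteq> 0"
  proof
    assume "n = 0"
    then have "?v = ?w" using vc wc by (intro eq_vecI) auto
    then show False using ne by simp
  qed
  then have "Suc (card K) = card I" "Suc (card K) = card I'"
    using card B(3) B'(3) by (simp_all add: K_def)
  then obtain i i' where i: "i \<in> I" "I - {i} = K" and i': "i' \<in> I'" "I' - {i'} = K"
    using ex_remove_eq[OF fin(1), of K] ex_remove_eq[OF fin(2), of K] by (auto simp: K_def)
  have Kv: "K \<subseteq> active ?v" and Kw: "K \<subseteq> active ?w"
    using B(2) B'(2) by (auto simp: K_def)
  have seg: "closed_segment_vec ?v ?w = {x \<in> P. K \<subseteq> active x}"
  proof
    show "closed_segment_vec ?v ?w \<subseteq> {x \<in> P. K \<subseteq> active x}"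
      by (rule closed_segment_subset_active[OF B(1) Kv B'(1) Kw])
    show "{x \<in> P. K \<subseteq> active x} \<subseteq> closed_segment_vec ?v ?w"
    proof
      fix x assume x: "x \<in> {x \<in> P. K \<subseteq> active x}"
      obtain s where s: "s \<ge> 0" "x = ?v + s \<cdot>\<^sub>v (?w - ?v)"
        using active_line[OF B(4) B(1,2) i(1) B'(1) _ ne[symmetric]] i(2) Kw x by auto
      obtain s' where s': "s' \<ge> 0" "x = ?w + s' \<cdot>\<^sub>v (?v - ?w)"
        using active_line[OF B'(4) B'(1,2) i'(1) B(1) _ ne] i'(2) Kv x by auto
      have "s \<le> 1" using line_param_le_one[OF vc wc ne s'(1)] s(2) s'(2) by simp
      then show "x \<in> closed_segment_vec ?v ?w" using s closed_segment_vec_eq[OF vc wc] by auto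
    qed
  qed
  have "is_face n P (closed_segment_vec ?v ?w)"
    unfolding is_face_iff seg using minimizers_row_sum[OF B(1) Kv] B(1) Kv row_sum_carrier by blast
  then show ?thesis
    unfolding adjacent_def using vertex_if_lex_feasible_basis[OF I] vertex_if_lex_feasible_basis[OF I'] ne by blast
qed

section \<open>Lexicographic pivoting\<close>

definition rank_one_update :: "real mat \<Rightarrow> real vec \<Rightarrow> (nat \<Rightarrow> real) \<Rightarrow> real mat" where
  "rank_one_update X d t = mat n (1 + m) (\<lambda>(a, k). X $$ (a, k) + d $ a * t k)"

lemma rank_one_update_carrier [simp]: "rank_one_update X d t \<in> carrier_mat n (1 + m)"
  and dim_rank_one_update [simp]: "dim_row (rank_one_update X d t) = n" "dim_col (rank_one_update X d t) = 1 + m"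
  unfolding rank_one_update_def by simp_all

lemma col_rank_one_update:
  assumes "X \<in> carrier_mat n (1 + m)" "d \<in> carrier_vec n" "k < 1 + m"
  shows "col (rank_one_update X d t) k = col X k + t k \<cdot>\<^sub>v d"
  using assms unfolding rank_one_update_def by (intro eq_vecI) auto

lemma A_mult_rank_one_update:
  assumes X: "X \<in> carrier_mat n (1 + m)" and d: "d \<in> carrier_vec n" and jk: "j < m" "k < 1 + m"
  shows "(A * rank_one_update X d t) $$ (j, k) = (A * X) $$ (j, k) + (row A j \<bullet> d) * t k"
  using col_rank_one_update[OF X d jk(2)] X d jk by (simp add: scalar_prod_add_smult[of _ n])

text \<open>The lexicographic ratio test of the simplex method: the pivot row is a lexicographic
  minimum of the scaled slack rows, which keeps every row lexicographically nonnegative.\<close>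

lemma lex_ratio_test:
  assumes X: "X \<in> carrier_mat n (1 + m)" "lex_feasible X" and d: "d \<in> carrier_vec n"
    and blocking: "\<exists>j<m. row A j \<bullet> d < 0"
  obtains js t where "js < m" "row A js \<bullet> d < 0" "lex_nonneg (1 + m) t"
    "lex_feasible (rank_one_update X d t)" "tight_on (rank_one_update X d t) {js}"
proof -
  define B where "B = {j. j < m \<and> row A j \<bullet> d < 0}"
  define r where "r j k = ((A * X) $$ (j, k) - bt $$ (j, k)) / (- (row A j \<bullet> d))" for j k
  obtain js where js: "js \<in> B" "\<forall>j\<in>B. lex_nonneg (1 + m) (\<lambda>k. r j k - r js k)"
    using lex_nonneg_ex_min[of B "1 + m" r] blocking unfolding B_def by auto
  define t where "t = r js"
  have slack: "lex_nonneg (1 + m) (\<lambda>k. (A * X) $$ (j, k) - bt $$ (j, k))" if "j < m" for j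
    using X(2) that unfolding lex_feasible_def by blast
  have js_B: "js < m" "row A js \<bullet> d < 0" using js(1) unfolding B_def by auto
  have t: "lex_nonneg (1 + m) t"
    using lex_nonneg_scale[OF _ slack[OF js_B(1)], of "1 / (- (row A js \<bullet> d))"] js_B(2)
    unfolding t_def r_def by simp
  have feasible: "lex_feasible (rank_one_update X d t)"
    unfolding lex_feasible_def
  proof (intro allI impI)
    fix j assume j: "j < m"
    show "lex_nonneg (1 + m) (\<lambda>k. (A * rank_one_update X d t) $$ (j, k) - bt $$ (j, k))"
    proof (cases "row A j \<bullet> d \<ge> 0")
      case True
      have "lex_nonneg (1 + m) (\<lambda>k. ((A * X) $$ (j, k) - bt $$ (j, k)) + (row A j \<bullet> d) * t k)"
        using lex_nonneg_add[OF slack[OF j] lex_nonneg_scale[OF True t]] .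
      then show ?thesis
        by (rule iffD1[OF lex_nonneg_cong, rotated]) (simp add: A_mult_rank_one_update[OF X(1) d j])
    next
      case False
      then have "lex_nonneg (1 + m) (\<lambda>k. r j k - t k)" using js(2) j unfolding B_def t_def by auto
      then have "lex_nonneg (1 + m) (\<lambda>k. (- (row A j \<bullet> d)) * (r j k - t k))"
        using False by (intro lex_nonneg_scale) auto
      then show ?thesis
      proof (rule iffD1[OF lex_nonneg_cong, rotated])
        fix k assume k: "k < 1 + m"
        show "(- (row A j \<bullet> d)) * (r j k - t k) = (A * rank_one_update X d t) $$ (j, k) - bt $$ (j, k)"
          unfolding A_mult_rank_one_update[OF X(1) d j k] r_def using False by (simp add: field_simps)
      qed
    qed
  qed
  have tight: "tight_on (rank_one_update X d t) {js}"
    unfolding tight_on_def using js_B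
    by (simp add: A_mult_rank_one_update[OF X(1) d] t_def r_def field_simps del: index_mult_mat(1))
  show ?thesis by (rule that[OF js_B t feasible tight])
qed

lemma independent_rows_insert:
  assumes indep: "independent_rows I" and I: "I \<subseteq> {..<m}" and j: "j < m"
    and d: "d \<in> carrier_vec n" "\<forall>i\<in>I. row A i \<bullet> d = 0" "row A j \<bullet> d \<noteq> 0"
  shows "independent_rows (insert j I)"
  unfolding independent_rows_def
proof
  fix i assume i: "i \<in> insert j I"
  show "\<exists>D\<in>carrier_vec n. row A i \<bullet> D \<noteq> 0 \<and> (\<forall>i'\<in>insert j I - {i}. row A i' \<bullet> D = 0)"
  proof (cases "i = j")
    case True
    then show ?thesis using d by (intro bexI[OF _ d(1)]) auto
  next
    case False
    then have iI: "i \<in> I" using i by simp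
    obtain D where D: "D \<in> carrier_vec n" "row A i \<bullet> D \<noteq> 0" "\<forall>i'\<in>I - {i}. row A i' \<bullet> D = 0"
      using indep iI unfolding independent_rows_def by blast
    define D' where "D' = D + (- (row A j \<bullet> D) / (row A j \<bullet> d)) \<cdot>\<^sub>v d"
    have row_D': "row A i' \<bullet> D' = row A i' \<bullet> D + (- (row A j \<bullet> D) / (row A j \<bullet> d)) * (row A i' \<bullet> d)"
      if "i' < m" for i'
      unfolding D'_def using that D(1) d(1) by (simp add: scalar_prod_add_smult[of _ n])
    show ?thesis
    proof (intro bexI[of _ D'] conjI ballI)
      show "D' \<in> carrier_vec n" unfolding D'_def using D(1) d(1) by simp
      show "row A i \<bullet> D' \<noteq> 0" using row_D'[of i] iI I D(2) d(2) by auto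
      fix i' assume i': "i' \<in> insert j I - {i}"
      then show "row A i' \<bullet> D' = 0" using row_D'[of i'] I j D(3) d(2,3) by auto
    qed
  qed
qed

lemma lex_pivot:
  assumes X: "X \<in> carrier_mat n (1 + m)" "lex_feasible X" "tight_on X I"
    and I: "I \<subseteq> {..<m}" "independent_rows I"
    and d: "d \<in> carrier_vec n" "\<forall>i\<in>I. row A i \<bullet> d = 0" and blocking: "\<exists>j<m. row A j \<bullet> d < 0"
  obtains js \<theta> X' where "js < m" "js \<notin> I" "row A js \<bullet> d < 0" "\<theta> \<ge> 0"
    "X' \<in> carrier_mat n (1 + m)" "lex_feasible X'" "tight_on X' (insert js I)"
    "independent_rows (insert js I)" "col X' 0 = col X 0 + \<theta> \<cdot>\<^sub>v d"
proof -
  obtain js t where js: "js < m" "row A js \<bullet> d < 0" "lex_nonneg (1 + m) t"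
    "lex_feasible (rank_one_update X d t)" "tight_on (rank_one_update X d t) {js}"
    using lex_ratio_test[OF X(1,2) d(1) blocking] by blast
  have notin: "js \<notin> I" using js(2) d(2) by auto
  have tight: "tight_on (rank_one_update X d t) (insert js I)"
    using js(5) X(3) d I
    by (auto simp: tight_on_def A_mult_rank_one_update[OF X(1) d(1)] subset_iff simp del: index_mult_mat(1))
  have indep: "independent_rows (insert js I)"
    using independent_rows_insert[OF I(2,1) js(1) d] js(2) by simp
  have step: "t 0 \<ge> 0" using lex_nonneg_first[OF js(3)] by simp
  have col: "col (rank_one_update X d t) 0 = col X 0 + t 0 \<cdot>\<^sub>v d"
    using col_rank_one_update[OF X(1) d(1)] by simp
  show ?thesis
    by (rule that[OF js(1) notin js(2) step rank_one_update_carrier js(4) tight indep col])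
qed

definition point_mat :: "real vec \<Rightarrow> real mat" where
  "point_mat x = mat n (1 + m) (\<lambda>(a, k). if k = 0 then x $ a else 0)"

lemma lex_feasible_point_mat:
  assumes x: "x \<in> P"
  shows "point_mat x \<in> carrier_mat n (1 + m)" "lex_feasible (point_mat x)" "col (point_mat x) 0 = x"
proof -
  have xc: "x \<in> carrier_vec n" using mem_P_carrier[OF x] .
  show X: "point_mat x \<in> carrier_mat n (1 + m)" unfolding point_mat_def by simp
  have col: "col (point_mat x) k = (if k = 0 then x else 0\<^sub>v n)" if "k < 1 + m" for k
    unfolding point_mat_def using that xc by (intro eq_vecI) auto
  then show "col (point_mat x) 0 = x" by simp
  have entry: "(A * point_mat x) $$ (j, k) - bt $$ (j, k) =
      (if k = 0 then row A j \<bullet> x - b $ j else if k = j + 1 then 1 else 0)" if "j < m" "k < 1 + m" for j k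
    using col[OF that(2)] X that xc by (simp add: btilde_index)
  show "lex_feasible (point_mat x)"
    unfolding lex_feasible_def
  proof (intro allI impI)
    fix j assume j: "j < m"
    have ge: "b $ j \<le> row A j \<bullet> x" using mem_P_row[OF x j] .
    show "lex_nonneg (1 + m) (\<lambda>k. (A * point_mat x) $$ (j, k) - bt $$ (j, k))"
      unfolding lex_nonneg_def
    proof (intro disjI2)
      show "\<exists>k<1 + m. (\<forall>i<k. (A * point_mat x) $$ (j, i) - bt $$ (j, i) = 0) \<and>
          0 < (A * point_mat x) $$ (j, k) - bt $$ (j, k)"
      proof (cases "row A j \<bullet> x = b $ j")
        case True
        then show ?thesis using j entry by (intro exI[of _ "j + 1"]) auto
      next
        case False
        then show ?thesis using j ge entry by (intro exI[of _ 0]) auto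
      qed
    qed
  qed
qed

lemma degenerate_pivot:
  assumes X: "X \<in> carrier_mat n (1 + m)" "lex_feasible X" "tight_on X I" "col X 0 = x"
    and I: "I \<subseteq> active x" "independent_rows I"
    and d: "d \<in> carrier_vec n" "\<forall>i\<in>I. row A i \<bullet> d = 0" and j: "j \<in> active x" "row A j \<bullet> d \<noteq> 0"
  obtains js X' where "js \<notin> I" "X' \<in> carrier_mat n (1 + m)" "lex_feasible X'" "col X' 0 = x"
    "insert js I \<subseteq> active x" "tight_on X' (insert js I)" "independent_rows (insert js I)"
proof -
  have xc: "x \<in> carrier_vec n" unfolding X(4)[symmetric] using X(1) by (metis carrier_matD(1) col_dim)
  have Im: "I \<subseteq> {..<m}" using I(1) active_subset by blast
  have jm: "j < m" "row A j \<bullet> x = b $ j" using j(1) by (simp_all add: active_def)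
  define d' where "d' = (if row A j \<bullet> d < 0 then 1 else -1) \<cdot>\<^sub>v d"
  have d': "d' \<in> carrier_vec n" "\<forall>i\<in>I. row A i \<bullet> d' = 0" "row A j \<bullet> d' < 0"
    unfolding d'_def using d j(2) Im jm(1) by (auto simp: subset_iff)
  have blocking: "\<exists>j<m. row A j \<bullet> d' < 0" using jm(1) d'(3) by blast
  obtain js \<theta> X' where p: "js < m" "js \<notin> I" "row A js \<bullet> d' < 0" "\<theta> \<ge> 0"
    "X' \<in> carrier_mat n (1 + m)" "lex_feasible X'" "tight_on X' (insert js I)"
    "independent_rows (insert js I)" "col X' 0 = col X 0 + \<theta> \<cdot>\<^sub>v d'"
    by (rule lex_pivot[OF X(1-3) Im I(2) d'(1,2) blocking])
  \<comment> \<open>The active row j blocks every step of positive length.\<close>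
  have "b $ j \<le> row A j \<bullet> (x + \<theta> \<cdot>\<^sub>v d')"
    using mem_P_row[OF lex_feasible_first_col[OF p(5,6)] jm(1)] p(9) X(4) by simp
  then have "\<theta> * (row A j \<bullet> d') \<ge> 0"
    using jm d'(1) xc by (simp add: scalar_prod_add_smult[of _ n])
  then have "\<theta> = 0" using p(4) d'(3) by (simp add: zero_le_mult_iff)
  then have col: "col X' 0 = x" using p(9) X(1,4) xc d'(1) by (auto intro!: eq_vecI)
  have "insert js I \<subseteq> active x"
    using tight_on_first_col[OF p(5,7)] p(1) Im col by simp
  from that[OF p(2,5,6) col this p(7,8)] show ?thesis .
qed

lemma extend_active_basis:
  assumes x: "x \<in> P"
    and extendable: "\<And>I. I \<subseteq> active x \<Longrightarrow> card I < N \<Longrightarrow>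
       \<exists>d\<in>carrier_vec n. (\<forall>i\<in>I. row A i \<bullet> d = 0) \<and> (\<exists>j\<in>active x. row A j \<bullet> d \<noteq> 0)"
  obtains X I where "X \<in> carrier_mat n (1 + m)" "lex_feasible X" "col X 0 = x"
    "I \<subseteq> active x" "card I = N" "tight_on X I" "independent_rows I"
proof -
  have "\<exists>X I. X \<in> carrier_mat n (1 + m) \<and> lex_feasible X \<and> col X 0 = x \<and> I \<subseteq> active x \<and>
      card I = k \<and> tight_on X I \<and> independent_rows I" if "k \<le> N" for k
    using that
  proof (induction k)
    case 0
    show ?case
      using lex_feasible_point_mat[OF x]
      by (intro exI[of _ "point_mat x"] exI[of _ "{}"]) (simp add: tight_on_def independent_rows_def)
  next
    case (Suc k)
    then obtain X I where XI: "X \<in> carrier_mat n (1 + m)" "lex_feasible X" "col X 0 = x"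
      "I \<subseteq> active x" "card I = k" "tight_on X I" "independent_rows I" by auto
    obtain d j where d: "d \<in> carrier_vec n" "\<forall>i\<in>I. row A i \<bullet> d = 0"
      and j: "j \<in> active x" "row A j \<bullet> d \<noteq> 0"
      using extendable[OF XI(4)] XI(5) Suc(2) by force
    obtain js X' where p: "js \<notin> I" "X' \<in> carrier_mat n (1 + m)" "lex_feasible X'" "col X' 0 = x"
      "insert js I \<subseteq> active x" "tight_on X' (insert js I)" "independent_rows (insert js I)"
      by (rule degenerate_pivot[OF XI(1,2,6,3) XI(4,7) d j])
    have "finite I" using XI(4) active_subset by (meson finite_lessThan finite_subset subset_trans)
    then have "card (insert js I) = Suc k" using p(1) XI(5) by simp
    then show ?case using p(2-7) by (intro exI[of _ X'] exI[of _ "insert js I"]) simp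
  qed
  from this[OF order_refl] obtain X I where "X \<in> carrier_mat n (1 + m)" "lex_feasible X" "col X 0 = x"
    "I \<subseteq> active x" "card I = N" "tight_on X I" "independent_rows I" by blast
  then show ?thesis by (rule that)
qed

section \<open>Vertices and edges come from lex-feasible bases\<close>

lemma vertex_extendable:
  assumes v: "is_vertex n P v" and I: "I \<subseteq> active v" "card I < n"
  shows "\<exists>d\<in>carrier_vec n. (\<forall>i\<in>I. row A i \<bullet> d = 0) \<and> (\<exists>j\<in>active v. row A j \<bullet> d \<noteq> 0)"
proof -
  have Im: "I \<subseteq> {..<m}" using I(1) active_subset by blast
  then have "finite I" by (rule finite_subset) simp
  moreover have "row A ` I \<subseteq> carrier_vec n" using Im by auto
  ultimately obtain d where d: "d \<in> carrier_vec n" "d \<noteq> 0\<^sub>v n" "\<forall>s\<in>row A ` I. s \<bullet> d = 0"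
    using ex_nonzero_orthogonal_vec[of "row A ` I" n] I(2) card_image_le[of I "row A"] by auto
  then show ?thesis using vertex_active_kernel[OF v d(1)] by blast
qed

lemma lex_feasible_basis_if_vertex:
  assumes v: "is_vertex n P v"
  obtains I where "lex_feasible_basis A b I" "basic_point I = v"
proof -
  obtain X I where X: "X \<in> carrier_mat n (1 + m)" "lex_feasible X" "col X 0 = v"
    and I: "I \<subseteq> active v" "card I = n" "tight_on X I" "independent_rows I"
    by (rule extend_active_basis[OF vertex_in_P[OF v] vertex_extendable[OF v]])
  have "I \<subseteq> {..<m}" using I(1) active_subset by blast
  note basis = lex_feasible_basisI[OF X(1,2) I(3) this I(2,4)]
  show ?thesis by (rule that[OF basis(1)]) (use basis(2) X(3) in simp)
qed

lemma vertex_active_direction: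
  assumes z: "is_vertex n P z" and u: "u \<in> P" "u \<noteq> z"
  shows "\<exists>j\<in>active z. row A j \<bullet> (z - u) < 0"
proof -
  have zc: "z \<in> carrier_vec n" and uc: "u \<in> carrier_vec n"
    using vertex_in_P[OF z] u(1) by (simp_all add: mem_P_carrier)
  have "z - u \<noteq> 0\<^sub>v n" using vec_eq_if_diff_zero[OF zc uc] u(2) by auto
  then obtain j where j: "j \<in> active z" "row A j \<bullet> (z - u) \<noteq> 0"
    using vertex_active_kernel[OF z, of "z - u"] zc uc by auto
  have "row A j \<bullet> (z - u) = b $ j - row A j \<bullet> u"
    using j(1) zc uc by (simp add: active_def scalar_prod_minus_distrib[of _ n])
  then have "row A j \<bullet> (z - u) \<le> 0" using mem_P_row[OF u(1)] j(1) by (simp add: active_def)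
  then show ?thesis using j by force
qed

lemma lex_pivot_to_endpoint:
  assumes X: "X \<in> carrier_mat n (1 + m)" "lex_feasible X" "tight_on X K"
    and K: "K \<subseteq> {..<m}" "independent_rows K" "Suc (card K) = n"
    and e: "e \<in> carrier_vec n" "\<forall>k\<in>K. row A k \<bullet> e = 0"
    and z: "z \<in> P" "col X 0 + (1/2) \<cdot>\<^sub>v e = z" and j0: "j0 \<in> active z" "row A j0 \<bullet> e < 0"
  obtains js where "js \<notin> K" "row A js \<bullet> e < 0"
    "lex_feasible_basis A b (insert js K)" "basic_point (insert js K) = z"
proof -
  have j0m: "j0 < m" "row A j0 \<bullet> z = b $ j0" using j0(1) by (simp_all add: active_def)
  have blocking: "\<exists>j<m. row A j \<bullet> e < 0" using j0m(1) j0(2) by blast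
  obtain js \<theta> X' where p: "js < m" "js \<notin> K" "row A js \<bullet> e < 0" "\<theta> \<ge> 0"
    "X' \<in> carrier_mat n (1 + m)" "lex_feasible X'" "tight_on X' (insert js K)"
    "independent_rows (insert js K)" "col X' 0 = col X 0 + \<theta> \<cdot>\<^sub>v e"
    by (rule lex_pivot[OF X K(1,2) e blocking])
  have c0: "col X 0 \<in> carrier_vec n" using X(1) by (metis carrier_matD(1) col_dim)
  have row_X': "row A j \<bullet> col X' 0 = row A j \<bullet> z + (\<theta> - 1/2) * (row A j \<bullet> e)" if "j < m" for j
    using that p(9) z(2)[symmetric] c0 e(1) by (simp add: scalar_prod_add_smult[of _ n] algebra_simps)
  have "b $ j0 \<le> row A j0 \<bullet> col X' 0"
    using mem_P_row[OF lex_feasible_first_col[OF p(5,6)] j0m(1)] .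
  then have "(\<theta> - 1/2) * (row A j0 \<bullet> e) \<ge> 0" using row_X'[OF j0m(1)] j0m(2) by simp
  then have "\<theta> \<le> 1/2" using j0(2) by (simp add: zero_le_mult_iff)
  \<comment> \<open>The row j0, active at z, blocks longer steps; the new row js blocks shorter ones.\<close>
  have "js \<in> active (col X' 0)" using tight_on_first_col[OF p(5,7)] p(1) K(1) by simp
  then have "(\<theta> - 1/2) * (row A js \<bullet> e) \<le> 0"
    using row_X'[OF p(1)] mem_P_row[OF z(1) p(1)] by (simp add: active_def)
  then have "\<theta> \<ge> 1/2" using p(3) by (simp add: mult_le_0_iff)
  then have "\<theta> = 1/2" using \<open>\<theta> \<le> 1/2\<close> by simp
  then have "col X' 0 = z" by (simp only: p(9) z(2))
  have "insert js K \<subseteq> {..<m}" "card (insert js K) = n"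
    using p(1,2) K(1,3) finite_subset[OF K(1)] by simp_all
  note basis = lex_feasible_basisI[OF p(5,6,7) this p(8)]
  show ?thesis by (rule that[OF p(2,3) basis(1)]) (use basis(2) \<open>col X' 0 = z\<close> in simp)
qed

lemma midpoint_in_P:
  assumes "v \<in> P" "w \<in> P"
  shows "v + (1/2) \<cdot>\<^sub>v (w - v) \<in> P"
proof -
  have "v + (1/2) \<cdot>\<^sub>v (w - v) \<in> closed_segment_vec v w"
    unfolding closed_segment_vec_eq[OF mem_P_carrier[OF assms(1)] mem_P_carrier[OF assms(2)]]
    by (rule CollectI, rule exI[of _ "1/2"]) simp
  then show ?thesis using closed_segment_subset_active[OF assms(1) _ assms(2), of "{}"] by auto
qed

lemma active_midpoint:
  assumes "v \<in> P" "w \<in> P"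
  shows "active (v + (1/2) \<cdot>\<^sub>v (w - v)) \<subseteq> active v \<inter> active w"
proof -
  have "row A j \<bullet> (v + (1/2) \<cdot>\<^sub>v (w - v)) = (row A j \<bullet> v + row A j \<bullet> w) / 2" if "j < m" for j
    using that mem_P_carrier[OF assms(1)] mem_P_carrier[OF assms(2)]
    by (simp add: scalar_prod_add_smult[of _ n] scalar_prod_minus_distrib[of _ n] field_simps)
  then show ?thesis using mem_P_row[OF assms(1)] mem_P_row[OF assms(2)] by (fastforce simp: active_def)
qed

lemma edge_midpoint_extendable:
  assumes adj: "adjacent n P v w"
    and I: "I \<subseteq> active (v + (1/2) \<cdot>\<^sub>v (w - v))" "card I < n - 1"
  shows "\<exists>d'\<in>carrier_vec n. (\<forall>i\<in>I. row A i \<bullet> d' = 0) \<and>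
    (\<exists>j\<in>active (v + (1/2) \<cdot>\<^sub>v (w - v)). row A j \<bullet> d' \<noteq> 0)"
proof -
  have vc: "v \<in> carrier_vec n" and wc: "w \<in> carrier_vec n"
    using adj vertex_in_P mem_P_carrier unfolding adjacent_def by blast+
  define d where "d = w - v"
  have dc: "d \<in> carrier_vec n" unfolding d_def using vc wc by simp
  have d0: "d \<noteq> 0\<^sub>v n" using vec_eq_if_diff_zero[OF wc vc] adj unfolding d_def adjacent_def by auto
  have Im: "I \<subseteq> {..<m}" using I(1) active_subset by blast
  then have "finite I" by (rule finite_subset) simp
  then have "card (insert d (row A ` I)) \<le> Suc (card I)"
    using card_image_le[of I "row A"] by (simp add: card_insert_if)
  then have "card (insert d (row A ` I)) < n" using I(2) by linarith
  moreover have "insert d (row A ` I) \<subseteq> carrier_vec n" using Im dc by auto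
  ultimately obtain d' where d': "d' \<in> carrier_vec n" "d' \<noteq> 0\<^sub>v n"
    "\<forall>s\<in>insert d (row A ` I). s \<bullet> d' = 0"
    using ex_nonzero_orthogonal_vec[of "insert d (row A ` I)" n] \<open>finite I\<close> by blast
  then have d'_orth: "d \<bullet> d' = 0" "\<forall>i\<in>I. row A i \<bullet> d' = 0" by auto
  have "\<exists>j\<in>active (v + (1/2) \<cdot>\<^sub>v (w - v)). row A j \<bullet> d' \<noteq> 0"
  proof (rule ccontr)
    assume "\<not> ?thesis"
    then obtain \<mu> where \<mu>: "d' = \<mu> \<cdot>\<^sub>v d"
      using edge_midpoint_active_kernel[OF adj d'(1)] unfolding d_def by auto
    then have "\<mu> * (d \<bullet> d) = 0" using d'_orth(1) dc by simp
    then have "\<mu> = 0" using scalar_prod_self_pos[OF dc d0] by simp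
    then show False using \<mu> d'(2) dc by auto
  qed
  then show ?thesis using d'(1) d'_orth(2) by blast
qed

lemma lex_feasible_bases_if_adjacent:
  assumes adj: "adjacent n P v w"
  obtains I I' where "lex_feasible_basis A b I" "lex_feasible_basis A b I'"
    "card (I \<inter> I') = n - 1" "basic_point I = v" "basic_point I' = w"
proof -
  have v: "is_vertex n P v" and w: "is_vertex n P w" and ne: "v \<noteq> w"
    using adj unfolding adjacent_def by auto
  have vP: "v \<in> P" and wP: "w \<in> P" using vertex_in_P v w by blast+
  have vc: "v \<in> carrier_vec n" and wc: "w \<in> carrier_vec n" using vP wP by (simp_all add: mem_P_carrier)
  obtain X K where XK: "X \<in> carrier_mat n (1 + m)" "lex_feasible X" "col X 0 = v + (1/2) \<cdot>\<^sub>v (w - v)"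
    "K \<subseteq> active (v + (1/2) \<cdot>\<^sub>v (w - v))" "card K = n - 1" "tight_on X K" "independent_rows K"
    by (rule extend_active_basis[OF midpoint_in_P[OF vP wP] edge_midpoint_extendable[OF adj]])
  have Km: "K \<subseteq> {..<m}" using XK(4) active_subset by blast
  have Kvw: "\<forall>k\<in>K. row A k \<bullet> (v - w) = 0" "\<forall>k\<in>K. row A k \<bullet> (w - v) = 0"
    using XK(4) active_midpoint[OF vP wP] Km vc wc
    by (auto simp: active_def scalar_prod_minus_distrib[of _ n] subset_iff)
  have "n \<noteq> 0" using ne vc wc by (metis carrier_vecD eq_vecI less_nat_zero_code)
  then have n: "Suc (card K) = n" using XK(5) by simp
  have ends: "col X 0 + (1/2) \<cdot>\<^sub>v (v - w) = v" "col X 0 + (1/2) \<cdot>\<^sub>v (w - v) = w"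
    unfolding XK(3) using vc wc by (auto intro!: eq_vecI simp: field_simps)
  obtain j1 where j1: "j1 \<in> active v" "row A j1 \<bullet> (v - w) < 0"
    using vertex_active_direction[OF v wP ne[symmetric]] by blast
  obtain j2 where j2: "j2 \<in> active w" "row A j2 \<bullet> (w - v) < 0"
    using vertex_active_direction[OF w vP ne] by blast
  obtain js1 where js1: "js1 \<notin> K" "row A js1 \<bullet> (v - w) < 0"
    "lex_feasible_basis A b (insert js1 K)" "basic_point (insert js1 K) = v"
    using lex_pivot_to_endpoint[OF XK(1,2,6) Km XK(7) n _ Kvw(1) vP ends(1) j1] vc wc by auto
  obtain js2 where js2: "js2 \<notin> K" "row A js2 \<bullet> (w - v) < 0"
    "lex_feasible_basis A b (insert js2 K)" "basic_point (insert js2 K) = w"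
    using lex_pivot_to_endpoint[OF XK(1,2,6) Km XK(7) n _ Kvw(2) wP ends(2) j2] vc wc by auto
  have "js1 < m" using lex_feasible_basisD(2)[OF js1(3)] active_subset by blast
  then have "js1 \<noteq> js2" using js1(2) js2(2) vc wc by (auto simp: scalar_prod_minus_distrib[of _ n])
  then have "insert js1 K \<inter> insert js2 K = K" using js1(1) js2(1) by auto
  then show ?thesis using that js1(3,4) js2(3,4) XK(5) by simp
qed

lemma vertex_set_eq: "{v. is_vertex n P v} = basic_point ` fst (G_lex A b)"
proof (intro equalityI subsetI)
  fix v assume "v \<in> {v. is_vertex n P v}"
  then obtain I where "lex_feasible_basis A b I" "basic_point I = v"
    using lex_feasible_basis_if_vertex by blast
  then show "v \<in> basic_point ` fst (G_lex A b)" by (auto simp: G_lex_def)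
qed (auto simp: G_lex_def vertex_if_lex_feasible_basis)

lemma adjacency_eq:
  "{(v, w). adjacent n P v w} =
    {(basic_point I, basic_point I') | I I'. (I, I') \<in> snd (G_lex A b) \<and> basic_point I \<noteq> basic_point I'}"
proof (intro equalityI subsetI; clarify)
  fix v w assume adj: "adjacent n P v w"
  obtain I I' where "lex_feasible_basis A b I" "lex_feasible_basis A b I'" "card (I \<inter> I') = n - 1"
    "basic_point I = v" "basic_point I' = w"
    by (rule lex_feasible_bases_if_adjacent[OF adj])
  moreover have "v \<noteq> w" using adj unfolding adjacent_def by blast
  ultimately show "\<exists>I I'. (v, w) = (basic_point I, basic_point I') \<and> (I, I') \<in> snd (G_lex A b) \<and>
      basic_point I \<noteq> basic_point I'"
    by (auto simp: G_lex_def)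
qed (use adjacent_if_lex_feasible_bases in \<open>auto simp: G_lex_def\<close>)

end

theorem theorem3p8:
  fixes A :: "real mat" and b :: "real vec" and m n :: nat
  assumes "A \<in> carrier_mat m n" and "b \<in> carrier_vec m"
    and "is_polytope n (polyhedron A b)"
  shows "G_vert n (polyhedron A b) = graph_image (\<lambda>I. first_col (XI A b I)) (G_lex A b)"
proof -
  interpret lin_ineq A b m n using assms(1,2) by unfold_locales
  show ?thesis
    unfolding G_vert_def graph_image_def vertex_set_eq adjacency_eq ..
qed

end
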